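(* Let $V$ be the Volterra operator on $L^2[0,1]$ and let $0\neq f\in C[0,1]$. Then there exist a sequence $\{\lambda_k\}_{k\ge1}$ of positive numbers with $\lambda_k\to0$ and a number $d>0$ such that \[\|(\lambda_k-V)^{-1}f\|\ge e^{d/\lambda_k}\quad\text{for all }k\ge1.\]
   Context: $Vf(t)=\int_0^t f(s)\,ds$; the norm is the $L^2[0,1]$ norm. *)

theory Defs
  imports "HOL-Analysis.Analysis"
begin

text \<open>Elements of L^2[0,1] (complex scalars), represented by functions real => complex;
  only their values on [0,1] (up to null sets) matter.\<close>
definition L2_01 :: "(real \<Rightarrow> complex) set" where
  "L2_01 = {g. set_borel_measurable lborel {0..1} g \<and>
               set_integrable lborel {0..1} (\<lambda>t. (cmod (g t))^2)}"

definition L2_norm_01 :: "(real \<Rightarrow> complex) \<Rightarrow> real" where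
  "L2_norm_01 g = sqrt (LINT t:{0..1}|lborel. (cmod (g t))^2)"

definition volterra :: "(real \<Rightarrow> complex) \<Rightarrow> real \<Rightarrow> complex" where
  "volterra g t = (LINT s:{0..t}|lborel. g s)"

definition is_resolvent_image :: "real \<Rightarrow> (real \<Rightarrow> complex) \<Rightarrow> (real \<Rightarrow> complex) \<Rightarrow> bool" where
  "is_resolvent_image lam f g \<longleftrightarrow> g \<in> L2_01 \<and>
     (AE t in lborel. t \<in> {0..1} \<longrightarrow> complex_of_real lam * g t - volterra g t = f t)"

end

theory Submission
  imports Defs "HOL-Real_Asymp.Real_Asymp"
begin

(*
  For y = V g the equation (lam - V) g = f is the linear ODE lam y' = f + y, y(0) = 0, whose
  solution gives V g (1) = K(1/lam) / lam with K(x) = int_0^1 e^(x(1-s)) f(s) ds. Since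
  |V g (1)| <= ||g||_1 <= ||g||_2, it suffices to find d > 0 with |K(n)| > e^(d n) for infinitely
  many integers n, and to take lam = 1/n.
  If no such d existed, fix r < 1 and expand 1 - exp(-e^(m(r-s))) = sum_k (-1)^k e^((k+1)m(r-s)) / (k+1)!.
  Integrated against f, the k-th term is e^(-(k+1)m(1-r)) K((k+1)m) / (k+1)!, so the subexponential
  growth of K makes the integral tend to 0 as m -> infinity. The integrand tends to the indicator
  of [0,r), hence int_0^r f = 0 for all r < 1, and f = 0.
*)

section \<open>Linear first-order ODEs\<close>

lemma linear_ode_solution_eq:
  fixes y f :: "real \<Rightarrow> 'a::banach"
  assumes lam: "lam \<noteq> 0" and b: "0 \<le> b" and y0: "y 0 = 0"
    and y': "\<And>t. t \<in> {0..b} \<Longrightarrow> (y has_vector_derivative (1 / lam) *\<^sub>R (f t + y t)) (at t within {0..b})"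
  shows "y b = (1 / lam) *\<^sub>R integral {0..b} (\<lambda>s. exp ((b - s) / lam) *\<^sub>R f s)"
proof -
  define P where "P t = exp (- t / lam) *\<^sub>R y t" for t
  have P': "(P has_vector_derivative (exp (- t / lam) / lam) *\<^sub>R f t) (at t within {0..b})"
    if "t \<in> {0..b}" for t
  proof -
    have "((\<lambda>t. exp (- t / lam)) has_real_derivative exp (- t / lam) * (- 1 / lam)) (at t within {0..b})"
      using lam by (auto intro!: derivative_eq_intros)
    from has_vector_derivative_scaleR[OF this y'[OF that]] show ?thesis
      unfolding P_def by (simp add: algebra_simps scaleR_add_right)
  qed
  have "((\<lambda>s. (exp (- s / lam) / lam) *\<^sub>R f s) has_integral P b) {0..b}"
    using fundamental_theorem_of_calculus[OF b P'] by (simp add: P_def y0)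
  then have "((\<lambda>s. (exp (b / lam) * (exp (- s / lam) / lam)) *\<^sub>R f s) has_integral y b) {0..b}"
    using has_integral_cmul[where c = "exp (b / lam)"] by (force simp: P_def exp_minus field_simps)
  moreover have coeff: "(exp (b / lam) * (exp (- s / lam) / lam)) *\<^sub>R f s = (1 / lam) *\<^sub>R (exp ((b - s) / lam) *\<^sub>R f s)" for s
    by (simp add: diff_divide_distrib exp_diff exp_minus field_simps)
  ultimately have "((\<lambda>s. (1 / lam) *\<^sub>R (exp ((b - s) / lam) *\<^sub>R f s)) has_integral y b) {0..b}"
    by (simp only: coeff)
  then show ?thesis
    by (metis integral_unique integral_cmul)
qed

lemma linear_ode_solution_exists:
  fixes f :: "real \<Rightarrow> 'a::banach"
  assumes lam: "lam \<noteq> 0" and f: "continuous_on {0..b} f"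
  shows "\<exists>y. y 0 = 0 \<and> continuous_on {0..b} y \<and>
    (\<forall>t\<in>{0..b}. (y has_vector_derivative (1 / lam) *\<^sub>R (f t + y t)) (at t within {0..b}))"
proof -
  define Q where "Q t = integral {0..t} (\<lambda>s. exp (- s / lam) *\<^sub>R f s)" for t
  define y where "y t = (exp (t / lam) / lam) *\<^sub>R Q t" for t
  have Q': "(Q has_vector_derivative exp (- t / lam) *\<^sub>R f t) (at t within {0..b})"
    if "t \<in> {0..b}" for t
    unfolding Q_def using lam by (intro integral_has_vector_derivative continuous_intros f that) auto
  have y': "(y has_vector_derivative (1 / lam) *\<^sub>R (f t + y t)) (at t within {0..b})"
    if "t \<in> {0..b}" for t
  proof -
    have "((\<lambda>t. exp (t / lam) / lam) has_real_derivative exp (t / lam) / lam * (1 / lam)) (at t within {0..b})"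
      using lam by (auto intro!: derivative_eq_intros)
    from has_vector_derivative_scaleR[OF this Q'[OF that]] show ?thesis
      unfolding y_def using lam by (simp add: exp_minus scaleR_add_right field_simps)
  qed
  then have "continuous_on {0..b} y"
    unfolding continuous_on_eq_continuous_within using has_vector_derivative_continuous by blast
  with y' show ?thesis
    by (intro exI[of _ y]) (simp add: y_def Q_def)
qed

section \<open>The resolvent of the Volterra operator\<close>

lemma set_integral_le_sqrt_set_integral_square:
  fixes u :: "'a \<Rightarrow> real"
  assumes A: "emeasure M A = 1"
    and u: "set_integrable M A u" and u2: "set_integrable M A (\<lambda>x. u x ^ 2)"
  shows "(LINT x:A|M. u x) \<le> sqrt (LINT x:A|M. u x ^ 2)"
proof -
  define a where "a = (LINT x:A|M. u x)"
  have "A \<in> sets M"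
    using A emeasure_notin_sets by fastforce
  then have const: "set_integrable M A (\<lambda>_. c)" for c :: real
    using A set_integrable_mult_right[of c M A "\<lambda>_. 1"] by (simp add: set_integrable_def)
  have measure_A: "measure M A = 1"
    using A by (simp add: measure_def)
  have "0 \<le> (LINT x:A|M. (u x - a) ^ 2)"
    unfolding set_lebesgue_integral_def by (rule integral_nonneg_AE) simp
  also have "\<dots> = (LINT x:A|M. (u x ^ 2 - 2 * a * u x) + a ^ 2)"
    by (simp add: power2_eq_square algebra_simps)
  also have "\<dots> = (LINT x:A|M. u x ^ 2 - 2 * a * u x) + (LINT x:A|M. a ^ 2)"
    using u u2 const by (intro set_integral_add(2) set_integral_diff(1)) auto
  also have "\<dots> = (LINT x:A|M. u x ^ 2) - a ^ 2"
    using u u2 \<open>A \<in> sets M\<close> A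
    by (simp add: set_integral_const measure_A a_def power2_eq_square)
  finally show ?thesis
    unfolding a_def by (intro real_le_rsqrt) simp
qed

lemma L2_01_imp_set_integrable:
  assumes "g \<in> L2_01"
  shows "set_integrable lborel {0..1} g"
proof -
  have g2: "set_integrable lborel {0..1} (\<lambda>t. (cmod (g t))^2)"
    and meas: "set_borel_measurable lborel {0..1} g"
    using assms by (auto simp: L2_01_def)
  have "set_integrable lborel {0..1::real} (\<lambda>_. 1::real)"
    unfolding set_integrable_def by (rule borel_integrable_compact) auto
  then have "set_integrable lborel {0..1} (\<lambda>t. 1 + (cmod (g t))^2)"
    using g2 by (rule set_integral_add(1))
  then show ?thesis
    unfolding set_integrable_def
  proof (rule Bochner_Integration.integrable_bound)
    show "(\<lambda>t. indicator {0..1} t *\<^sub>R g t) \<in> borel_measurable lborel"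
      using meas by (simp add: set_borel_measurable_def)
    show "AE t in lborel. norm (indicator {0..1} t *\<^sub>R g t) \<le> norm (indicator {0..1} t *\<^sub>R (1 + (cmod (g t))^2))"
    proof (rule AE_I2)
      fix t
      have "2 * cmod (g t) \<le> (cmod (g t))^2 + 1"
        using zero_le_power2[of "cmod (g t) - 1"] by (simp add: power2_diff)
      then have "cmod (g t) \<le> 1 + (cmod (g t))^2"
        using norm_ge_zero[of "g t"] by linarith
      then show "norm (indicator {0..1} t *\<^sub>R g t) \<le> norm (indicator {0..1} t *\<^sub>R (1 + (cmod (g t))^2))"
        by (simp add: indicator_def)
    qed
  qed
qed

lemma continuous_on_imp_L2_01:
  assumes "continuous_on {0..1} g"
  shows "g \<in> L2_01"
proof -
  have "continuous_on {0..1} (\<lambda>t. (cmod (g t))^2)"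
    by (intro continuous_intros assms)
  with assms show ?thesis
    using borel_integrable_atLeastAtMost'[of 0 1 g] borel_integrable_atLeastAtMost'[of 0 1 "\<lambda>t. (cmod (g t))^2"]
    by (auto simp: L2_01_def set_borel_measurable_def set_integrable_def)
qed

lemma set_integral_norm_le_L2_norm_01:
  assumes "g \<in> L2_01"
  shows "(LINT t:{0..1}|lborel. cmod (g t)) \<le> L2_norm_01 g"
  unfolding L2_norm_01_def
  using assms set_integrable_norm[OF L2_01_imp_set_integrable[OF assms]]
  by (intro set_integral_le_sqrt_set_integral_square) (auto simp: L2_01_def)

lemma volterra_eq_integral:
  assumes "continuous_on {0..1} g" "t \<in> {0..1}"
  shows "volterra g t = integral {0..t} g"
proof -
  have "continuous_on {0..t} g"
    using assms by (auto intro: continuous_on_subset)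
  then show ?thesis
    unfolding volterra_def by (intro set_borel_integral_eq_integral(2) borel_integrable_atLeastAtMost')
qed

lemma volterra_continuous_on:
  assumes "set_integrable lborel {0..1} g"
  shows "continuous_on {0..1} (volterra g)"
proof -
  have eq: "integral {0..t} g = volterra g t" if "t \<in> {0..1}" for t
  proof -
    have "set_integrable lborel {0..t} g"
      using that by (intro set_integrable_subset[OF assms]) auto
    then show ?thesis
      unfolding volterra_def by (rule set_borel_integral_eq_integral(2)[symmetric])
  qed
  show ?thesis
    using indefinite_integral_continuous_1[OF set_borel_integral_eq_integral(1)[OF assms]] eq
    by (rule continuous_on_eq)
qed

lemma volterra_cong_AE:
  assumes g: "set_integrable lborel {0..1} g" and h: "set_integrable lborel {0..1} h"
    and gh: "AE s in lborel. s \<in> {0..1} \<longrightarrow> g s = h s" and t: "t \<in> {0..1}"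
  shows "volterra g t = volterra h t"
  unfolding volterra_def set_lebesgue_integral_def
proof (rule integral_cong_AE)
  have "{0..t} \<subseteq> {0..1}"
    using t by auto
  then show "(\<lambda>s. indicator {0..t} s *\<^sub>R g s) \<in> borel_measurable lborel"
    and "(\<lambda>s. indicator {0..t} s *\<^sub>R h s) \<in> borel_measurable lborel"
    using set_integrable_subset[OF g] set_integrable_subset[OF h] by (auto simp: set_integrable_def)
  show "AE s in lborel. indicator {0..t} s *\<^sub>R g s = indicator {0..t} s *\<^sub>R h s"
    using gh by eventually_elim (use t in \<open>auto simp: indicator_def\<close>)
qed

lemma resolvent_image_exists:
  assumes lam: "lam \<noteq> 0" and f: "continuous_on {0..1} f"
  shows "\<exists>g. is_resolvent_image lam f g"
proof -
  obtain y where y0: "y 0 = 0" and y_cont: "continuous_on {0..1} y"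
    and y': "\<And>t. t \<in> {0..1} \<Longrightarrow> (y has_vector_derivative (1 / lam) *\<^sub>R (f t + y t)) (at t within {0..1})"
    using linear_ode_solution_exists[OF lam f] by blast
  define g where "g t = (1 / lam) *\<^sub>R (f t + y t)" for t
  have g_cont: "continuous_on {0..1} g"
    unfolding g_def by (intro continuous_intros f y_cont)
  have "volterra g t = y t" if t: "t \<in> {0..1}" for t
  proof -
    have "(g has_integral y t - y 0) {0..t}"
      using t by (intro fundamental_theorem_of_calculus)
        (auto simp: g_def intro!: has_vector_derivative_within_subset[OF y'])
    then show ?thesis
      using volterra_eq_integral[OF g_cont t] y0 by (simp add: integral_unique)
  qed
  then have "complex_of_real lam * g t - volterra g t = f t" if "t \<in> {0..1}" for t
    using that lam by (simp add: g_def scaleR_conv_of_real field_simps)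
  then show ?thesis
    unfolding is_resolvent_image_def using continuous_on_imp_L2_01[OF g_cont] by auto
qed

lemma volterra_one_of_resolvent_image:
  assumes lam: "lam \<noteq> 0" and f: "continuous_on {0..1} f" and res: "is_resolvent_image lam f g"
  shows "volterra g 1 = (1 / lam) *\<^sub>R integral {0..1} (\<lambda>s. exp ((1 - s) / lam) *\<^sub>R f s)"
proof -
  have g: "set_integrable lborel {0..1} g"
    and eq: "AE t in lborel. t \<in> {0..1} \<longrightarrow> complex_of_real lam * g t - volterra g t = f t"
    using res L2_01_imp_set_integrable unfolding is_resolvent_image_def by auto
  (* g is only square integrable, but it agrees a.e. with the continuous h, so V g = V h is C^1 *)
  define h where "h t = (1 / lam) *\<^sub>R (f t + volterra g t)" for t
  have h_cont: "continuous_on {0..1} h"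
    unfolding h_def by (intro continuous_intros f volterra_continuous_on g)
  have "AE t in lborel. t \<in> {0..1} \<longrightarrow> g t = h t"
    using eq by eventually_elim (use lam in \<open>auto simp: h_def scaleR_conv_of_real field_simps\<close>)
  then have Vg: "volterra g t = integral {0..t} h" if "t \<in> {0..1}" for t
    using volterra_cong_AE[OF g borel_integrable_atLeastAtMost'[OF h_cont] _ that]
      volterra_eq_integral[OF h_cont that] by simp
  have "(volterra g has_vector_derivative h t) (at t within {0..1})" if "t \<in> {0..1}" for t
    using that Vg by (rule has_vector_derivative_transform[OF _ _ integral_has_vector_derivative[OF h_cont that]])
  moreover have "volterra g 0 = 0"
    using Vg[of 0] by simp
  ultimately show ?thesis
    using linear_ode_solution_eq[OF lam, of 1 "volterra g" f] by (simp add: h_def)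
qed

definition exp_kernel_integral :: "(real \<Rightarrow> complex) \<Rightarrow> real \<Rightarrow> complex" where
  "exp_kernel_integral f x = (LINT s:{0..1}|lborel. exp (x * (1 - s)) *\<^sub>R f s)"

lemma exp_kernel_integral_eq_integral:
  assumes "continuous_on {0..1} f"
  shows "exp_kernel_integral f x = integral {0..1} (\<lambda>s. exp (x * (1 - s)) *\<^sub>R f s)"
proof -
  have "continuous_on {0..1} (\<lambda>s. exp (x * (1 - s)) *\<^sub>R f s)"
    by (intro continuous_intros assms)
  then show ?thesis
    unfolding exp_kernel_integral_def by (intro set_borel_integral_eq_integral(2) borel_integrable_atLeastAtMost')
qed

lemma L2_norm_01_resolvent_image_ge:
  assumes lam: "lam > 0" and f: "continuous_on {0..1} f" and res: "is_resolvent_image lam f g"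
  shows "cmod (exp_kernel_integral f (1 / lam)) / lam \<le> L2_norm_01 g"
proof -
  have g: "g \<in> L2_01"
    using res by (simp add: is_resolvent_image_def)
  have "cmod (exp_kernel_integral f (1 / lam)) / lam = cmod (volterra g 1)"
    using volterra_one_of_resolvent_image[OF _ f res] lam
    by (simp add: exp_kernel_integral_eq_integral[OF f] divide_inverse mult.commute)
  also have "\<dots> \<le> (LINT t:{0..1}|lborel. cmod (g t))"
    unfolding volterra_def by (rule set_integral_norm_bound[OF L2_01_imp_set_integrable[OF g]])
  also have "\<dots> \<le> L2_norm_01 g"
    by (rule set_integral_norm_le_L2_norm_01[OF g])
  finally show ?thesis .
qed

section \<open>Growth of the exponential kernel integral\<close>

lemma one_minus_exp_neg_sums:
  fixes y :: real
  shows "(\<lambda>n. (-1)^n / fact (Suc n) * y ^ Suc n) sums (1 - exp (- y))"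
proof -
  have "(\<lambda>n. (- y) ^ n / fact n) sums exp (- y)"
    using exp_converges[of "- y"] by (simp add: divide_inverse mult.commute)
  then have "(\<lambda>n. (- y) ^ Suc n / fact (Suc n)) sums (exp (- y) - 1)"
    by (subst sums_Suc_iff) simp
  from sums_minus[OF this] show ?thesis
    by (simp add: power_minus[of y] mult_ac)
qed

lemma sums_set_integral_bounded:
  fixes F :: "nat \<Rightarrow> 'b \<Rightarrow> 'a::{banach, second_countable_topology}"
  assumes A: "A \<in> sets M" "emeasure M A < \<infinity>"
    and F: "\<And>n. set_integrable M A (F n)"
    and bound: "\<And>n x. x \<in> A \<Longrightarrow> norm (F n x) \<le> b n" and b: "summable b"
    and sums: "\<And>x. x \<in> A \<Longrightarrow> (\<lambda>n. F n x) sums G x"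
  shows "(\<lambda>n. LINT x:A|M. F n x) sums (LINT x:A|M. G x)"
proof -
  have ind_bound: "norm (indicator A x *\<^sub>R F n x) \<le> indicator A x * b n" for n x
    using bound[of x n] by (simp add: indicator_def)
  have "(\<lambda>n. integral\<^sup>L M (\<lambda>x. indicator A x *\<^sub>R F n x)) sums (\<integral>x. (\<Sum>n. indicator A x *\<^sub>R F n x) \<partial>M)"
  proof (rule sums_integral)
    show "integrable M (\<lambda>x. indicator A x *\<^sub>R F n x)" for n
      using F by (simp add: set_integrable_def)
    show "AE x in M. summable (\<lambda>n. norm (indicator A x *\<^sub>R F n x))"
      using ind_bound by (intro AE_I2 summable_comparison_test'[OF summable_mult[OF b]]) auto
    have "(LINT x|M. norm (indicator A x *\<^sub>R F n x)) \<le> (LINT x|M. indicator A x * b n)" for n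
    proof (rule integral_mono)
      show "integrable M (\<lambda>x. norm (indicator A x *\<^sub>R F n x))"
        using F[of n] unfolding set_integrable_def by (rule integrable_norm)
      show "integrable M (\<lambda>x. indicator A x * b n)"
        using A by simp
    qed (rule ind_bound)
    then show "summable (\<lambda>n. LINT x|M. norm (indicator A x *\<^sub>R F n x))"
      using A(1) by (intro summable_comparison_test'[OF summable_mult[OF b, of "measure M A"]])
        (simp add: integral_nonneg_AE sets.Int_space_eq2)
  qed
  moreover have "(\<Sum>n. indicator A x *\<^sub>R F n x) = indicator A x *\<^sub>R G x" for x
    using sums[of x] by (cases "x \<in> A") (auto simp: sums_iff)
  ultimately show ?thesis
    by (simp add: set_lebesgue_integral_def)
qed

lemma set_integral_one_minus_exp_neg_sums:
  fixes \<phi> :: "real \<Rightarrow> real" and f :: "real \<Rightarrow> 'a::{banach, second_countable_topology}"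
  assumes K: "compact K" and \<phi>: "continuous_on K \<phi>" and f: "continuous_on K f"
  shows "(\<lambda>n. ((-1)^n / fact (Suc n)) *\<^sub>R (LINT s:K|lborel. \<phi> s ^ Suc n *\<^sub>R f s))
           sums (LINT s:K|lborel. (1 - exp (- \<phi> s)) *\<^sub>R f s)"
proof -
  obtain C where C: "\<And>s. s \<in> K \<Longrightarrow> \<bar>\<phi> s\<bar> \<le> C"
    using compact_imp_bounded[OF compact_continuous_image[OF \<phi> K]] by (auto simp: bounded_iff)
  obtain D where D: "\<And>s. s \<in> K \<Longrightarrow> norm (f s) \<le> D"
    using compact_imp_bounded[OF compact_continuous_image[OF f K]] by (auto simp: bounded_iff)
  have "(\<lambda>n. LINT s:K|lborel. ((-1)^n / fact (Suc n)) *\<^sub>R (\<phi> s ^ Suc n *\<^sub>R f s))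
      sums (LINT s:K|lborel. (1 - exp (- \<phi> s)) *\<^sub>R f s)"
  proof (rule sums_set_integral_bounded[where b = "\<lambda>n. C * D * (C ^ n / fact n)"])
    show "K \<in> sets lborel" "emeasure lborel K < \<infinity>"
      using K emeasure_bounded_finite[OF compact_imp_bounded[OF K]] by (auto intro: borel_compact)
    show "set_integrable lborel K (\<lambda>s. ((-1)^n / fact (Suc n)) *\<^sub>R (\<phi> s ^ Suc n *\<^sub>R f s))" for n
      unfolding set_integrable_def by (intro borel_integrable_compact K continuous_intros \<phi> f)
    show "summable (\<lambda>n. C * D * (C ^ n / fact n))"
      using summable_exp[of C] by (intro summable_mult) (simp add: divide_inverse mult.commute)
    show "(\<lambda>n. ((-1)^n / fact (Suc n)) *\<^sub>R (\<phi> s ^ Suc n *\<^sub>R f s)) sums ((1 - exp (- \<phi> s)) *\<^sub>R f s)" for s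
      using sums_scaleR_left[OF one_minus_exp_neg_sums[of "\<phi> s"], of "f s"] by (simp add: scaleR_scaleR)
    fix n s
    assume s: "s \<in> K"
    then have "0 \<le> C"
      using C[OF s] by linarith
    have "\<bar>\<phi> s\<bar> ^ Suc n / fact (Suc n) \<le> C ^ Suc n / fact n"
      using C[OF s] \<open>0 \<le> C\<close> by (intro frac_le power_mono fact_mono) auto
    then have "\<bar>\<phi> s\<bar> ^ Suc n / fact (Suc n) * norm (f s) \<le> C ^ Suc n / fact n * D"
      using \<open>0 \<le> C\<close> D[OF s] by (intro mult_mono) auto
    then show "norm (((-1)^n / fact (Suc n)) *\<^sub>R (\<phi> s ^ Suc n *\<^sub>R f s)) \<le> C * D * (C ^ n / fact n)"
      by (simp add: abs_mult power_abs mult_ac)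
  qed
  then show ?thesis
    by (simp only: set_integral_scaleR_right)
qed

lemma exp_kernel_integral_series:
  assumes f: "continuous_on {0..1} f"
  shows "(\<lambda>n. ((-1)^n * exp (- (real (Suc n) * m * (1 - r))) / fact (Suc n)) *\<^sub>R
              exp_kernel_integral f (real (Suc n) * m))
           sums (LINT s:{0..1}|lborel. (1 - exp (- exp (m * (r - s)))) *\<^sub>R f s)"
proof -
  have "exp (m * (r - s)) ^ Suc n *\<^sub>R f s =
      exp (- (real (Suc n) * m * (1 - r))) *\<^sub>R (exp (real (Suc n) * m * (1 - s)) *\<^sub>R f s)" for n s
    unfolding scaleR_scaleR exp_of_nat_mult[symmetric] exp_add[symmetric] by (simp add: algebra_simps)
  then have "(LINT s:{0..1}|lborel. exp (m * (r - s)) ^ Suc n *\<^sub>R f s) =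
      exp (- (real (Suc n) * m * (1 - r))) *\<^sub>R exp_kernel_integral f (real (Suc n) * m)" for n
    unfolding exp_kernel_integral_def by (simp only: set_integral_scaleR_right)
  with set_integral_one_minus_exp_neg_sums[OF compact_Icc _ f, of "\<lambda>s. exp (m * (r - s))"]
  show ?thesis
    by (simp add: continuous_intros mult.commute)
qed

lemma tendsto_one_minus_exp_neg_exp:
  fixes c :: real
  shows "c > 0 \<Longrightarrow> (\<lambda>m. 1 - exp (- exp (real m * c))) \<longlonglongrightarrow> 1"
    and "c < 0 \<Longrightarrow> (\<lambda>m. 1 - exp (- exp (real m * c))) \<longlonglongrightarrow> 0"
  by real_asymp+

lemma tendsto_indicator_one_minus_exp_neg_exp:
  fixes r s :: real
  assumes "s \<noteq> r" "r \<le> 1"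
  shows "(\<lambda>m. indicator {0..1} s * (1 - exp (- exp (real m * (r - s))))) \<longlonglongrightarrow> indicator {0..r} s"
proof (cases "s < r")
  case True
  then have "(\<lambda>m. 1 - exp (- exp (real m * (r - s)))) \<longlonglongrightarrow> 1"
    by (intro tendsto_one_minus_exp_neg_exp) simp
  with True assms show ?thesis
    by (auto simp: indicator_def)
next
  case False
  then have "(\<lambda>m. 1 - exp (- exp (real m * (r - s)))) \<longlonglongrightarrow> 0"
    using assms by (intro tendsto_one_minus_exp_neg_exp) simp
  with False assms show ?thesis
    using tendsto_mult_right_zero by (auto simp: indicator_def)
qed

lemma tendsto_set_integral_one_minus_exp_neg_exp:
  fixes f :: "real \<Rightarrow> 'a::{banach, second_countable_topology}"
  assumes f: "continuous_on {0..1} f" and r: "0 \<le> r" "r \<le> 1"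
  shows "(\<lambda>m. LINT s:{0..1}|lborel. (1 - exp (- exp (real m * (r - s)))) *\<^sub>R f s)
           \<longlonglongrightarrow> (LINT s:{0..r}|lborel. f s)"
proof -
  obtain B where B: "\<And>s. s \<in> {0..1} \<Longrightarrow> norm (f s) \<le> B"
    using compact_imp_bounded[OF compact_continuous_image[OF f compact_Icc]] unfolding bounded_iff by blast
  have "continuous_on {0..r} f"
    using f r by (auto intro: continuous_on_subset)
  then have lim_int: "set_integrable lborel {0..r} f"
    by (rule borel_integrable_atLeastAtMost')
  have int: "set_integrable lborel {0..1} (\<lambda>s. (1 - exp (- exp (real m * (r - s)))) *\<^sub>R f s)" for m
    by (intro borel_integrable_atLeastAtMost' continuous_intros f)
  show ?thesis
    unfolding set_lebesgue_integral_def
  proof (rule integral_dominated_convergence[where w = "\<lambda>s. indicator {0..1} s * B"])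
    show "(\<lambda>s. indicator {0..r} s *\<^sub>R f s) \<in> borel_measurable lborel"
      and "(\<lambda>s. indicator {0..1} s *\<^sub>R ((1 - exp (- exp (real m * (r - s)))) *\<^sub>R f s)) \<in> borel_measurable lborel" for m
      using lim_int int[of m] by (auto simp: set_integrable_def)
    show "integrable lborel (\<lambda>s. indicator {0..1::real} s * B)"
      using borel_integrable_atLeastAtMost'[OF continuous_on_const, of 0 1 B] by (simp add: set_integrable_def)
    show "AE s in lborel. norm (indicator {0..1} s *\<^sub>R ((1 - exp (- exp (real m * (r - s)))) *\<^sub>R f s))
        \<le> indicator {0..1} s * B" for m
    proof (rule AE_I2)
      fix s
      have "\<bar>1 - exp (- exp (real m * (r - s)))\<bar> * norm (f s) \<le> 1 * B" if "s \<in> {0..1}"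
        using B[OF that] by (intro mult_mono) (auto simp: abs_le_iff)
      then show "norm (indicator {0..1} s *\<^sub>R ((1 - exp (- exp (real m * (r - s)))) *\<^sub>R f s))
          \<le> indicator {0..1} s * B"
        by (simp add: indicator_def)
    qed
    show "AE s in lborel. (\<lambda>m. indicator {0..1} s *\<^sub>R ((1 - exp (- exp (real m * (r - s)))) *\<^sub>R f s))
        \<longlonglongrightarrow> indicator {0..r} s *\<^sub>R f s"
      using AE_lborel_singleton[of r]
    proof eventually_elim
      case (elim s)
      with r show ?case
        using tendsto_scaleR[OF tendsto_indicator_one_minus_exp_neg_exp[of s r] tendsto_const[of "f s"]]
        by (simp add: scaleR_scaleR)
    qed
  qed
qed

lemma norm_damped_series_term_le:
  fixes z :: "'a::real_normed_vector" and m t :: real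
  assumes "0 \<le> m * t" and z: "norm z \<le> exp (t / 2 * (real (Suc n) * m))"
  shows "norm (((-1)^n * exp (- (real (Suc n) * m * t)) / fact (Suc n)) *\<^sub>R z)
           \<le> exp (- (m * t / 2)) * (1 / fact n)"
proof -
  have "norm (((-1)^n * exp (- (real (Suc n) * m * t)) / fact (Suc n)) *\<^sub>R z)
      \<le> exp (- (real (Suc n) * m * t)) * exp (t / 2 * (real (Suc n) * m)) / fact (Suc n)"
    using z by (simp add: abs_mult power_abs divide_right_mono mult_left_mono)
  also have "\<dots> = exp (- (real (Suc n) * (m * t / 2))) / fact (Suc n)"
    by (simp add: exp_add[symmetric] algebra_simps)
  also have "\<dots> \<le> exp (- (m * t / 2)) / fact n"
  proof (intro frac_le fact_mono)
    show "exp (- (real (Suc n) * (m * t / 2))) \<le> exp (- (m * t / 2))"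
      using mult_right_mono[of 1 "real (Suc n)" "m * t / 2"] assms(1) by simp
  qed auto
  finally show ?thesis
    by simp
qed

lemma norm_set_integral_one_minus_exp_neg_exp_le:
  fixes m N :: nat
  assumes f: "continuous_on {0..1} f" and r: "r < 1"
    and N: "\<And>n. n \<ge> N \<Longrightarrow> cmod (exp_kernel_integral f (real n)) \<le> exp ((1 - r) / 2 * real n)"
    and m: "N \<le> m"
  shows "cmod (LINT s:{0..1}|lborel. (1 - exp (- exp (real m * (r - s)))) *\<^sub>R f s)
           \<le> exp (- (real m * (1 - r) / 2)) * exp 1"
proof -
  define t where "t = 1 - r"
  have term_bound: "norm (((-1)^n * exp (- (real (Suc n) * real m * t)) / fact (Suc n)) *\<^sub>R
      exp_kernel_integral f (real (Suc n) * real m)) \<le> exp (- (real m * t / 2)) * (1 / fact n)" for n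
  proof (rule norm_damped_series_term_le)
    show "0 \<le> real m * t"
      using r by (simp add: t_def)
    have "N \<le> Suc n * m"
      using m by (metis le_add1 mult_Suc order_trans)
    from N[OF this] show "cmod (exp_kernel_integral f (real (Suc n) * real m)) \<le> exp (t / 2 * (real (Suc n) * real m))"
      by (simp only: of_nat_mult t_def)
  qed
  have "(\<lambda>n. 1 / fact n) sums exp (1::real)"
    using exp_converges[of "1::real"] by (simp add: divide_inverse)
  then have bound_sums: "(\<lambda>n. exp (- (real m * t / 2)) * (1 / fact n)) sums (exp (- (real m * t / 2)) * exp 1)"
    by (rule sums_mult)
  have "(LINT s:{0..1}|lborel. (1 - exp (- exp (real m * (r - s)))) *\<^sub>R f s) =
      (\<Sum>n. ((-1)^n * exp (- (real (Suc n) * real m * t)) / fact (Suc n)) *\<^sub>R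
        exp_kernel_integral f (real (Suc n) * real m))"
    using exp_kernel_integral_series[OF f, of "real m" r, folded t_def] by (rule sums_unique)
  also have "norm \<dots> \<le> (\<Sum>n. exp (- (real m * t / 2)) * (1 / fact n))"
    by (rule norm_suminf_le[OF term_bound sums_summable[OF bound_sums]])
  also have "\<dots> = exp (- (real m * t / 2)) * exp 1"
    using bound_sums by (rule sums_unique[symmetric])
  finally show ?thesis
    by (simp add: t_def)
qed

lemma set_integral_eq_0_if_exp_kernel_integral_subexponential:
  assumes f: "continuous_on {0..1} f"
    and subexp: "\<And>d. d > 0 \<Longrightarrow> \<forall>\<^sub>F n in sequentially. cmod (exp_kernel_integral f (real n)) \<le> exp (d * real n)"
    and r: "0 \<le> r" "r < 1"
  shows "(LINT s:{0..r}|lborel. f s) = 0"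
proof -
  define I where "I m = (LINT s:{0..1}|lborel. (1 - exp (- exp (real m * (r - s)))) *\<^sub>R f s)" for m :: nat
  obtain N where N: "\<And>n. n \<ge> N \<Longrightarrow> cmod (exp_kernel_integral f (real n)) \<le> exp ((1 - r) / 2 * real n)"
    using subexp[of "(1 - r) / 2"] r by (auto simp: eventually_sequentially)
  have "\<forall>\<^sub>F m in sequentially. norm (I m) \<le> exp (- (real m * (1 - r) / 2)) * exp 1"
    unfolding I_def using f r N by (intro eventually_sequentiallyI norm_set_integral_one_minus_exp_neg_exp_le)
  moreover have "(\<lambda>m. exp (- (real m * (1 - r) / 2)) * exp 1) \<longlonglongrightarrow> 0"
    using r by real_asymp
  ultimately have "I \<longlonglongrightarrow> 0"
    by (rule Lim_null_comparison)
  moreover have "I \<longlonglongrightarrow> (LINT s:{0..r}|lborel. f s)"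
    unfolding I_def using f r by (intro tendsto_set_integral_one_minus_exp_neg_exp) auto
  ultimately show ?thesis
    using LIMSEQ_unique by metis
qed

lemma continuous_on_eq_0_if_integrals_eq_0:
  fixes f :: "real \<Rightarrow> 'a::banach"
  assumes f: "continuous_on {a..b} f" and int0: "\<And>r. r \<in> {a<..<b} \<Longrightarrow> integral {a..r} f = 0"
    and "a < b" and x: "x \<in> {a..b}"
  shows "f x = 0"
proof (rule continuous_constant_on_closure[of "{a<..<b}"])
  show "continuous_on (closure {a<..<b}) f"
    using f \<open>a < b\<close> by simp
  show "x \<in> closure {a<..<b}"
    using x \<open>a < b\<close> by simp
  fix y assume y: "y \<in> {a<..<b}"
  have "at y within {a..b} = at y"
    using y by (intro at_within_interior) simp
  moreover have "((\<lambda>u. integral {a..u} f) has_vector_derivative f y) (at y within {a..b})"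
    using y by (intro integral_has_vector_derivative f) simp
  ultimately have "((\<lambda>u. integral {a..u} f) has_vector_derivative f y) (at y)"
    by simp
  moreover have "((\<lambda>u. integral {a..u} f) has_vector_derivative 0) (at y)"
    by (rule has_vector_derivative_transform_within_open[OF has_vector_derivative_const open_greaterThanLessThan y])
      (simp add: int0)
  ultimately show "f y = 0"
    by (rule vector_derivative_unique_at)
qed

lemma exp_kernel_integral_frequently_large:
  assumes f: "continuous_on {0..1} f" and nonzero: "\<exists>t\<in>{0..1}. f t \<noteq> 0"
  shows "\<exists>d>0. \<exists>\<^sub>F n in sequentially. exp (d * real n) < cmod (exp_kernel_integral f (real n))"
proof (rule ccontr)
  assume not_large: "\<not> ?thesis"
  have subexp: "\<forall>\<^sub>F n in sequentially. cmod (exp_kernel_integral f (real n)) \<le> exp (d * real n)"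
    if "d > 0" for d
  proof -
    have "\<not> (\<exists>\<^sub>F n in sequentially. exp (d * real n) < cmod (exp_kernel_integral f (real n)))"
      using not_large that by blast
    then show ?thesis
      by (simp add: not_frequently not_less)
  qed
  have "integral {0..r} f = 0" if r: "r \<in> {0<..<1}" for r
  proof -
    have "continuous_on {0..r} f"
      using f r by (auto intro: continuous_on_subset)
    then show ?thesis
      using set_integral_eq_0_if_exp_kernel_integral_subexponential[OF f subexp, of r] r
      by (simp add: set_borel_integral_eq_integral(2) borel_integrable_atLeastAtMost')
  qed
  then have "f t = 0" if "t \<in> {0..1}" for t
    using continuous_on_eq_0_if_integrals_eq_0[OF f _ _ that] by simp
  with nonzero show False
    by blast
qed

lemma frequently_sequentially_imp_subseq:
  assumes "\<exists>\<^sub>F n in sequentially. P n"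
  shows "\<exists>r :: nat \<Rightarrow> nat. strict_mono r \<and> (\<forall>k. P (r k))"
proof -
  have "infinite {n. P n}"
    using assms unfolding cofinite_eq_sequentially[symmetric] frequently_cofinite .
  then show ?thesis
    using infinite_enumerate by blast
qed

theorem lemma4p10:
  fixes f :: "real \<Rightarrow> complex"
  assumes "continuous_on {0..1} f"
    and "\<exists>t\<in>{0..1}. f t \<noteq> 0"
  shows "\<exists>lam :: nat \<Rightarrow> real. \<exists>d > 0. (\<forall>k. lam k > 0) \<and> lam \<longlonglongrightarrow> 0 \<and>
           (\<forall>k. \<exists>g. is_resolvent_image (lam k) f g) \<and>
           (\<forall>k g. is_resolvent_image (lam k) f g \<longrightarrow> L2_norm_01 g \<ge> exp (d / lam k))"
proof -
  obtain d where "d > 0"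
    and "\<exists>\<^sub>F n in sequentially. exp (d * real n) < cmod (exp_kernel_integral f (real n))"
    using exp_kernel_integral_frequently_large[OF assms] by blast
  then have "\<exists>\<^sub>F n in sequentially. 0 < n \<and> exp (d * real n) < cmod (exp_kernel_integral f (real n))"
    by (intro frequently_eventually_conj eventually_gt_at_top)
  from frequently_sequentially_imp_subseq[OF this] obtain n :: "nat \<Rightarrow> nat" where n: "strict_mono n"
    and n_large: "\<forall>k. 0 < n k \<and> exp (d * real (n k)) < cmod (exp_kernel_integral f (real (n k)))"
    by blast
  then have n_pos: "0 < n k" and large: "exp (d * real (n k)) < cmod (exp_kernel_integral f (real (n k)))" for k
    by auto
  define lam where "lam = (\<lambda>k. 1 / real (n k))"
  have lam_pos: "\<forall>k. lam k > 0"
    using n_pos by (simp add: lam_def)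
  have lim: "lam \<longlonglongrightarrow> 0"
    using LIMSEQ_subseq_LIMSEQ[OF lim_inverse_n' n] by (simp add: lam_def o_def)
  have exists: "\<forall>k. \<exists>g. is_resolvent_image (lam k) f g"
    using lam_pos resolvent_image_exists[OF _ assms(1)] by (simp add: less_imp_neq[symmetric])
  have bound: "\<forall>k g. is_resolvent_image (lam k) f g \<longrightarrow> L2_norm_01 g \<ge> exp (d / lam k)"
  proof (intro allI impI)
    fix k g
    assume "is_resolvent_image (lam k) f g"
    have "exp (d / lam k) < cmod (exp_kernel_integral f (real (n k)))"
      using large[of k] by (simp add: lam_def)
    also have "\<dots> \<le> real (n k) * cmod (exp_kernel_integral f (real (n k)))"
      using n_pos[of k] by (simp add: mult_le_cancel_right1)
    also have "\<dots> \<le> L2_norm_01 g"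
      using L2_norm_01_resolvent_image_ge[OF lam_pos[rule_format] assms(1) \<open>is_resolvent_image (lam k) f g\<close>]
      by (simp add: lam_def mult.commute)
    finally show "exp (d / lam k) \<le> L2_norm_01 g"
      by simp
  qed
  show ?thesis
    using \<open>d > 0\<close> lam_pos lim exists bound by (intro exI[of _ lam] exI[of _ d] conjI)
qed

end
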